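(* Let $\gamma>0$, $a\in\mathbb{C}$ and $f\in\mathcal{H}_\gamma$. Then $$\mathcal{W}^{\gamma,a}_{RBF}f(z)=\exp\left(\frac{a^2-|a|^2}{\gamma^2}+\frac{2z(\overline a-a)}{\gamma^2}\right)f(z-a),\quad z\in\mathbb{C}.$$ Moreover, $\mathcal{W}^{\gamma,a}_{RBF}$ coincides with the translation operator $T_a[f](z):=f(z-a)$ (i.e. $\mathcal{W}^{\gamma,a}_{RBF}f=T_af$ for all $f\in\mathcal{H}_\gamma$) if and only if $a\in\mathbb{R}$.
   Context: For $\alpha>0$, $\mathcal{F}_\alpha$ is the Fock space of entire $f$ with $\frac{\alpha}{\pi}\int_{\mathbb{C}}|f|^2e^{-\alpha|z|^2}dA<\infty$, and $\mathcal{W}^\alpha_af(z)=f(z-a)\exp\left(\alpha\left(z\overline a-\frac{|a|^2}{2}\right)\right)$ is the Weyl operator on $\mathcal{F}_\alpha$. $\mathcal{H}_\gamma$ is the Hilbert space of entire $f$ with $\frac{2}{\pi\gamma^2}\int_{\mathbb{C}}|f(z)|^2\exp\left(\frac{(z-\overline z)^2}{\gamma^2}\right)dA(z)<\infty$. With $\mathcal{M}^{\gamma^2}_{RBF}f=e^{z^2/\gamma^2}f$ and $\mathcal{M}^{-\gamma^2}_{RBF}g=e^{-z^2/\gamma^2}g$, the RBF-Weyl operator is $\mathcal{W}^{\gamma,a}_{RBF}:=\mathcal{M}^{-\gamma^2}_{RBF}\circ\mathcal{W}^{2/\gamma^2}_a\circ\mathcal{M}^{\gamma^2}_{RBF}$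 on $\mathcal{H}_\gamma$. *)

theory Defs
  imports "HOL-Analysis.Analysis"
begin

definition weyl :: "real \<Rightarrow> complex \<Rightarrow> (complex \<Rightarrow> complex) \<Rightarrow> (complex \<Rightarrow> complex)" where
  "weyl \<alpha> a f = (\<lambda>z. f (z - a) * exp (of_real \<alpha> * (z * cnj a - of_real ((cmod a)\<^sup>2 / 2))))"

text \<open>The space H_gamma: entire functions with finite weighted L2 norm.
  The weight exp((z - cnj z)^2 / gamma^2) is real-valued; we take its real part.\<close>
definition H_space :: "real \<Rightarrow> (complex \<Rightarrow> complex) set" where
  "H_space \<gamma> = {f. f holomorphic_on UNIV \<and>
     integrable lborel (\<lambda>z. 2 / (pi * \<gamma>\<^sup>2) * (cmod (f z))\<^sup>2 * exp (Re ((z - cnj z)\<^sup>2) / \<gamma>\<^sup>2))}"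

definition M_RBF :: "real \<Rightarrow> (complex \<Rightarrow> complex) \<Rightarrow> (complex \<Rightarrow> complex)" where
  "M_RBF \<gamma> f = (\<lambda>z. exp (z\<^sup>2 / of_real (\<gamma>\<^sup>2)) * f z)"

definition M_RBF_inv :: "real \<Rightarrow> (complex \<Rightarrow> complex) \<Rightarrow> (complex \<Rightarrow> complex)" where
  "M_RBF_inv \<gamma> g = (\<lambda>z. exp (- (z\<^sup>2) / of_real (\<gamma>\<^sup>2)) * g z)"

definition RBF_weyl :: "real \<Rightarrow> complex \<Rightarrow> (complex \<Rightarrow> complex) \<Rightarrow> (complex \<Rightarrow> complex)" where
  "RBF_weyl \<gamma> a = M_RBF_inv \<gamma> \<circ> weyl (2 / \<gamma>\<^sup>2) a \<circ> M_RBF \<gamma>"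

definition translation :: "complex \<Rightarrow> (complex \<Rightarrow> complex) \<Rightarrow> (complex \<Rightarrow> complex)" where
  "translation a f = (\<lambda>z. f (z - a))"

end

theory Submission
  imports Defs "HOL-Probability.Distributions"
begin

text \<open>Conjugating the Fock Weyl operator by the multiplier \<open>exp (z\<^sup>2/\<gamma>\<^sup>2)\<close> multiplies
  \<open>f (z - a)\<close> by \<open>exp (((z - a)\<^sup>2 - z\<^sup>2)/\<gamma>\<^sup>2)\<close> times the Weyl factor, and the combined exponent
  is an affine function of \<open>z\<close> with slope \<open>2 (cnj a - a)/\<gamma>\<^sup>2\<close>; for real \<open>a\<close> it vanishes.
  Conversely, the Gaussian \<open>exp (- z\<^sup>2/\<gamma>\<^sup>2)\<close> lies in \<open>H\<^sub>\<gamma>\<close>, since its weighted squared modulus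
  is \<open>exp (- 2 \<bar>z\<bar>\<^sup>2/\<gamma>\<^sup>2)\<close>, and it vanishes nowhere. So if the operator is the translation,
  the exponential of that affine function is identically 1, which forces its slope to be 0.\<close>

lemma integrable_gaussian_real:
  fixes c :: real assumes "c > 0"
  shows "integrable lborel (\<lambda>x::real. exp (- c * x\<^sup>2))"
proof -
  define \<sigma> where "\<sigma> = 1 / sqrt (2 * c)"
  have "exp (- c * x\<^sup>2) = sqrt (pi / c) * normal_density 0 \<sigma> x" for x
    using assms by (simp add: normal_density_def \<sigma>_def real_sqrt_divide real_sqrt_mult field_simps)
  moreover have "\<sigma> > 0"
    using assms by (simp add: \<sigma>_def)
  ultimately show ?thesis
    by simp
qed

lemma integrable_gaussian:
  fixes c :: real assumes "c > 0"
  shows "integrable lborel (\<lambda>x::'a::euclidean_space. exp (- c * (norm x)\<^sup>2))"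
proof (rule integrableI_nonneg)
  show "(\<lambda>x::'a. exp (- c * (norm x)\<^sup>2)) \<in> borel_measurable lborel"
    by measurable
  show "AE x in lborel. 0 \<le> exp (- c * (norm x)\<^sup>2)"
    by simp
  have pointwise: "(\<lambda>x::'a. ennreal (exp (- c * (norm x)\<^sup>2)))
      = (\<lambda>x. \<Prod>b\<in>Basis. ennreal (exp (- c * (x \<bullet> b)\<^sup>2)))"
  proof
    fix x :: 'a
    have "(norm x)\<^sup>2 = (\<Sum>b\<in>Basis. (x \<bullet> b)\<^sup>2)"
      unfolding power2_norm_eq_inner by (subst euclidean_inner) (simp add: power2_eq_square)
    then show "ennreal (exp (- c * (norm x)\<^sup>2)) = (\<Prod>b\<in>Basis. ennreal (exp (- c * (x \<bullet> b)\<^sup>2)))"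
      by (simp add: sum_distrib_left exp_sum prod_ennreal flip: sum_negf)
  qed
  have "(\<integral>\<^sup>+x. ennreal (exp (- c * (norm (x::'a))\<^sup>2)) \<partial>lborel)
      = (\<Prod>b\<in>(Basis::'a set). \<integral>\<^sup>+t. ennreal (exp (- c * t\<^sup>2)) \<partial>lborel)"
    unfolding pointwise
    by (rule nn_integral_lborel_prod) auto
  also have "\<dots> < \<infinity>"
    using integrable_gaussian_real[OF assms]
    by (simp add: integrable_iff_bounded power_less_top_ennreal)
  finally show "(\<integral>\<^sup>+x. ennreal (exp (- c * (norm (x::'a))\<^sup>2)) \<partial>lborel) < \<infinity>" .
qed

lemma H_space_weight_gaussian:
  fixes \<gamma> :: real and z :: complex
  shows "(cmod (exp (- (z\<^sup>2) / of_real (\<gamma>\<^sup>2))))\<^sup>2 * exp (Re ((z - cnj z)\<^sup>2) / \<gamma>\<^sup>2)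
       = exp (- (2 / \<gamma>\<^sup>2) * (cmod z)\<^sup>2)"
proof -
  have "Re (- (z\<^sup>2) / of_real (\<gamma>\<^sup>2)) = ((Im z)\<^sup>2 - (Re z)\<^sup>2) / \<gamma>\<^sup>2"
    by (simp add: Re_power2 diff_divide_distrib)
  moreover have "Re ((z - cnj z)\<^sup>2) = - 4 * (Im z)\<^sup>2"
    by (simp add: power2_eq_square)
  ultimately have "2 * Re (- (z\<^sup>2) / of_real (\<gamma>\<^sup>2)) + Re ((z - cnj z)\<^sup>2) / \<gamma>\<^sup>2
      = - (2 / \<gamma>\<^sup>2) * (cmod z)\<^sup>2"
    by (simp add: cmod_power2 add_divide_distrib diff_divide_distrib algebra_simps)
  then show ?thesis
    by (simp flip: exp_of_nat_mult exp_add)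
qed

lemma gaussian_in_H_space:
  assumes "\<gamma> \<noteq> 0"
  shows "(\<lambda>z. exp (- (z\<^sup>2) / of_real (\<gamma>\<^sup>2))) \<in> H_space \<gamma>"
proof -
  have "(\<lambda>z. exp (- (z\<^sup>2) / of_real (\<gamma>\<^sup>2))) holomorphic_on UNIV"
    by (intro holomorphic_intros) auto
  moreover have "integrable lborel (\<lambda>z::complex. 2 / (pi * \<gamma>\<^sup>2) * exp (- (2 / \<gamma>\<^sup>2) * (cmod z)\<^sup>2))"
    using assms by (intro integrable_mult_right integrable_gaussian) simp
  ultimately show ?thesis
    unfolding H_space_def mem_Collect_eq mult.assoc H_space_weight_gaussian by blast
qed

lemma RBF_weyl_eq:
  "RBF_weyl \<gamma> a f z =
     exp ((a\<^sup>2 - of_real ((cmod a)\<^sup>2)) / of_real (\<gamma>\<^sup>2) + 2 * z * (cnj a - a) / of_real (\<gamma>\<^sup>2)) * f (z - a)"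
proof -
  have "RBF_weyl \<gamma> a f z = exp (- (z\<^sup>2) / of_real (\<gamma>\<^sup>2) + (z - a)\<^sup>2 / of_real (\<gamma>\<^sup>2)
      + of_real (2 / \<gamma>\<^sup>2) * (z * cnj a - of_real ((cmod a)\<^sup>2 / 2))) * f (z - a)"
    by (simp add: RBF_weyl_def M_RBF_def M_RBF_inv_def weyl_def exp_add mult_ac)
       (simp add: exp_diff exp_minus field_simps)
  also have "- (z\<^sup>2) / of_real (\<gamma>\<^sup>2) + (z - a)\<^sup>2 / of_real (\<gamma>\<^sup>2)
      + of_real (2 / \<gamma>\<^sup>2) * (z * cnj a - of_real ((cmod a)\<^sup>2 / 2))
     = (a\<^sup>2 - of_real ((cmod a)\<^sup>2)) / of_real (\<gamma>\<^sup>2) + 2 * z * (cnj a - a) / of_real (\<gamma>\<^sup>2)"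
    by (simp add: power2_eq_square diff_divide_distrib add_divide_distrib algebra_simps)
  finally show ?thesis .
qed

lemma RBF_weyl_real_eq_translation:
  assumes "a \<in> \<real>"
  shows "RBF_weyl \<gamma> a f = translation a f"
proof -
  obtain r where "a = of_real r"
    using assms by (auto elim: Reals_cases)
  then show ?thesis
    by (simp add: fun_eq_iff RBF_weyl_eq translation_def)
qed

lemma exp_affine_eq_1_imp_slope_0:
  fixes b d :: complex
  assumes "\<And>z. exp (b + z * d) = 1"
  shows "d = 0"
proof (rule ccontr)
  assume "d \<noteq> 0"
  then have "exp (b + (of_real pi * \<i> / d) * d) = - exp b"
    by (simp add: exp_add)
  with assms[of 0] assms[of "of_real pi * \<i> / d"] show False
    by simp
qed

lemma real_if_RBF_weyl_eq_translation:
  assumes "\<gamma> \<noteq> 0" and "\<And>z. f z \<noteq> 0" and "RBF_weyl \<gamma> a f = translation a f"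
  shows "a \<in> \<real>"
proof -
  have "exp ((a\<^sup>2 - of_real ((cmod a)\<^sup>2)) / of_real (\<gamma>\<^sup>2) + z * (2 * (cnj a - a) / of_real (\<gamma>\<^sup>2))) = 1"
    for z
    using fun_cong[OF assms(3), of z] assms(2)[of "z - a"]
    by (simp add: RBF_weyl_eq translation_def) (simp add: algebra_simps)
  then have "2 * (cnj a - a) / of_real (\<gamma>\<^sup>2) = 0"
    by (rule exp_affine_eq_1_imp_slope_0)
  with assms(1) show ?thesis
    by (simp add: Reals_cnj_iff)
qed

theorem mainTheorem17:
  fixes \<gamma> :: real and a :: complex
  assumes "\<gamma> > 0"
  shows "(\<forall>f \<in> H_space \<gamma>. \<forall>z. RBF_weyl \<gamma> a f z =
            exp ((a\<^sup>2 - of_real ((cmod a)\<^sup>2)) / of_real (\<gamma>\<^sup>2)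
                 + 2 * z * (cnj a - a) / of_real (\<gamma>\<^sup>2)) * f (z - a))
       \<and> ((\<forall>f \<in> H_space \<gamma>. RBF_weyl \<gamma> a f = translation a f) \<longleftrightarrow> a \<in> \<real>)"
proof (intro conjI iffI ballI allI RBF_weyl_eq RBF_weyl_real_eq_translation)
  assume "\<forall>f \<in> H_space \<gamma>. RBF_weyl \<gamma> a f = translation a f"
  with gaussian_in_H_space assms
  have "RBF_weyl \<gamma> a (\<lambda>z. exp (- (z\<^sup>2) / of_real (\<gamma>\<^sup>2))) = translation a (\<lambda>z. exp (- (z\<^sup>2) / of_real (\<gamma>\<^sup>2)))"
    by simp
  with assms show "a \<in> \<real>"
    by (intro real_if_RBF_weyl_eq_translation) auto
qed

end
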